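(* Consider the MT-model with $k$-stifling on $\mathbb{T}_d$ with $k\ge2$, $d\ge2$, and let $X^{(k)}$ be the number of successors of a given non-root vertex $v$ that are ever informed, conditionally on $v$ being informed. Then $$\mathbb{P}(X^{(k)}=i)=\binom{d}{i}\frac{(i+1)!}{(d+1)^{i+k}}\,\mathcal{S}(i,k),\qquad i\in\{0,1,\dots,d\},$$ where $\mathcal{S}(i,k):=\sum_{m_1=1}^{i+1}\sum_{m_2=m_1}^{i+1}\cdots\sum_{m_{k-1}=m_{k-2}}^{i+1}\prod_{\ell=1}^{k-1}m_\ell$ (a sum over $k-1$ nested indices $1\le m_1\le\cdots\le m_{k-1}\le i+1$). Moreover, $\mathbb{E}(X^{(k)})>1$ for every $d\ge2$.
   Context: Let $d\ge 2$ and let $\mathbb{T}_d$ be the infinite tree in which every vertex has degree $d+1$, with root $\mathbf 0$; the successors of a vertex $u$ are its neighbours farther from $\mathbf 0$. Fix $k\in\mathbb{N}$. The MT-model with $k$-stifling on $\mathbb{T}_d$ is the continuous-time Markov process $(\eta_t)_{t\ge0}$ on $\{-1,0,1,\dots,k\}^{\mathbb{T}_d}$, where $-1$ = ignorant, $i\in\{0,\dots,k-1\}$ = spreader that has had $i$ stifling experiences, $k$ = stifler. In configuration $\eta$, a vertex $x$ with $\eta(x)=-1$ jumps to $0$ at rate equal to the number of neighbours $y$ with $\eta(y)\in\{0,\dots,k-1\}$, and a vertex $x$ with $\eta(x)=i\in\{0,\dots,k-1\}$ jumps to $i+1$ at rate equal to the number of neighbours $y$ with $\eta(y)\in\{0,\dots,k\}$;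 stiflers never change. (Equivalently: each spreader contacts each of its $d+1$ neighbours at rate 1; contacting an ignorant makes it a spreader in state $0$, contacting a non-ignorant is a stifling experience.) Initially $\eta_0(\mathbf 0)=0$ and $\eta_0(x)=-1$ for $x\ne\mathbf 0$. A vertex is informed if it is ever in a state other than $-1$. *)

theory Defs
  imports "HOL-Probability.Probability"
begin

text \<open>A vertex of T_d is encoded as a list of child indices, most recent step first:
  [] is the root, and (c # u) is the c-th successor of u.  The root has d+1 successors
  (indices 0..d), every other vertex has d successors (indices 0..d-1), so every vertex
  has degree d+1.\<close>

definition nsucc :: "nat \<Rightarrow> nat list \<Rightarrow> nat" where
  "nsucc d u = (if u = [] then d + 1 else d)"

fun tvert :: "nat \<Rightarrow> nat list \<Rightarrow> bool" where
  "tvert d [] = True"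
| "tvert d (c # u) = (tvert d u \<and> c < nsucc d u)"

definition succs :: "nat \<Rightarrow> nat list \<Rightarrow> nat list set" where
  "succs d u = {c # u | c. c < nsucc d u}"

definition nbrs :: "nat \<Rightarrow> nat list \<Rightarrow> nat list set" where
  "nbrs d u = succs d u \<union> (if u = [] then {} else {tl u})"

type_synonym config = "nat list \<Rightarrow> int"

text \<open>States: -1 ignorant, 0..k-1 spreader, k stifler.\<close>

definition init_cfg :: config where
  "init_cfg = (\<lambda>x. if x = [] then 0 else -1)"

definition spreader :: "nat \<Rightarrow> config \<Rightarrow> nat list \<Rightarrow> bool" where
  "spreader k \<eta> x \<longleftrightarrow> 0 \<le> \<eta> x \<and> \<eta> x < int k"

text \<open>Every spreader contacts each of its neighbours at rate 1.  Each transition of the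
  continuous-time process is such a contact (spreader x, neighbour y), and all these
  contacts have rate 1, so the embedded jump chain picks such a pair uniformly.\<close>

definition contacts :: "nat \<Rightarrow> nat \<Rightarrow> config \<Rightarrow> (nat list \<times> nat list) set" where
  "contacts d k \<eta> = {(x, y). tvert d x \<and> spreader k \<eta> x \<and> y \<in> nbrs d x}"

definition contact_update :: "config \<Rightarrow> nat list \<times> nat list \<Rightarrow> config" where
  "contact_update \<eta> p = (case p of (x, y) \<Rightarrow>
      if \<eta> y = -1 then \<eta>(y := 0) else \<eta>(x := \<eta> x + 1))"

definition mt_step :: "nat \<Rightarrow> nat \<Rightarrow> config \<Rightarrow> config pmf" where
  "mt_step d k \<eta> =
     (if contacts d k \<eta> \<noteq> {} \<and> finite (contacts d k \<eta>)
      then map_pmf (contact_update \<eta>) (pmf_of_set (contacts d k \<eta>))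
      else return_pmf \<eta>)"

fun mt_cfg :: "nat \<Rightarrow> nat \<Rightarrow> nat \<Rightarrow> config pmf" where
  "mt_cfg d k 0 = return_pmf init_cfg"
| "mt_cfg d k (Suc n) = bind_pmf (mt_cfg d k n) (mt_step d k)"

definition informed_by :: "nat \<Rightarrow> nat \<Rightarrow> nat \<Rightarrow> nat list \<Rightarrow> real" where
  "informed_by d k n v = measure_pmf.prob (mt_cfg d k n) {\<eta>. \<eta> v \<noteq> -1}"

definition nsucc_informed :: "nat \<Rightarrow> config \<Rightarrow> nat list \<Rightarrow> nat" where
  "nsucc_informed d \<eta> v = card {c \<in> succs d v. \<eta> c \<noteq> -1}"

definition joint_by :: "nat \<Rightarrow> nat \<Rightarrow> nat \<Rightarrow> nat list \<Rightarrow> nat \<Rightarrow> real" where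
  "joint_by d k n v i =
     measure_pmf.prob (mt_cfg d k n) {\<eta>. \<eta> v \<noteq> -1 \<and> nsucc_informed d \<eta> v = i}"

text \<open>Since informed sets only grow and the process performs all its jumps in the jump
  chain, P(v ever informed) and P(v ever informed and exactly i successors ever informed)
  are the limits of these quantities as n goes to infinity.\<close>

definition P_informed :: "nat \<Rightarrow> nat \<Rightarrow> nat list \<Rightarrow> real" where
  "P_informed d k v = lim (\<lambda>n. informed_by d k n v)"

definition P_joint :: "nat \<Rightarrow> nat \<Rightarrow> nat list \<Rightarrow> nat \<Rightarrow> real" where
  "P_joint d k v i = lim (\<lambda>n. joint_by d k n v i)"

definition P_X :: "nat \<Rightarrow> nat \<Rightarrow> nat list \<Rightarrow> nat \<Rightarrow> real" where
  "P_X d k v i = P_joint d k v i / P_informed d k v"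

text \<open>nested_sum j lo hi = sum over lo \<le> m_1 \<le> ... \<le> m_j \<le> hi of m_1 * ... * m_j.\<close>

fun nested_sum :: "nat \<Rightarrow> nat \<Rightarrow> nat \<Rightarrow> nat" where
  "nested_sum 0 lo hi = 1"
| "nested_sum (Suc j) lo hi = (\<Sum>m = lo..hi. m * nested_sum j m hi)"

definition S_ik :: "nat \<Rightarrow> nat \<Rightarrow> nat" where
  "S_ik i k = nested_sum (k - 1) 1 (i + 1)"

end

theory Submission
  imports Defs
begin

text \<open>
  Seen from a non-root vertex v, the process is a two-parameter chain: while v is a spreader
  with s stifling experiences and j informed successors, each of its contacts informs a new
  successor with probability (d - j)/(d + 1) and is a stifling experience otherwise, because the
  parent of v and its informed successors are never ignorant again.  The law of the final number
  of informed successors is the absorption law of this chain; its recursion is solved by the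
  nested sums S(i, k), and the mean exceeds 1 already after two levels of the recursion.

  To transfer this to the jump chain of the whole process, evaluate the absorption probability
  at the current local state of v: in expectation it changes only when v gets informed, so its
  expectation after n jumps is the absorption probability from (0, 0) times P(v informed by
  time n).  It differs from the indicator of the final event by at most the number of contacts
  v still has to make, and the expectation of that number tends to 0 since at the n-th jump v
  makes a contact with probability at least 1/((d + 1)(n + 1)) and the harmonic series diverges.
\<close>

lemma expectation_bind_pmf:
  fixes f :: "'b \<Rightarrow> real"
  assumes "\<And>x. \<bar>f x\<bar> \<le> B"
  shows "measure_pmf.expectation (bind_pmf p q) f
       = measure_pmf.expectation p (\<lambda>x. measure_pmf.expectation (q x) f)"
  unfolding measure_pmf_bind
  by (rule integral_bind[where K = "count_space UNIV" and B = B and B' = 1])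
     (use assms in \<open>auto simp: measure_pmf_in_subprob_algebra\<close>)

lemma limit_zero_if_summable_div_Suc:
  fixes a :: "nat \<Rightarrow> real"
  assumes lim: "a \<longlonglongrightarrow> L" and nonneg: "\<And>n. 0 \<le> a n"
    and summable: "summable (\<lambda>n. a n / real (Suc n))"
  shows "L = 0"
proof (rule ccontr)
  assume "L \<noteq> 0"
  moreover have "0 \<le> L"
    using nonneg by (intro LIMSEQ_le_const[OF lim]) auto
  ultimately have L: "0 < L"
    by simp
  have "eventually (\<lambda>n. L / 2 < a n) sequentially"
    using lim L by (intro order_tendstoD(1)) auto
  then have "eventually (\<lambda>n. norm (inverse (real (Suc n))) \<le> 2 / L * (a n / real (Suc n))) sequentially"
  proof eventually_elim
    case (elim n)
    then have "1 \<le> 2 / L * a n"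
      using L by (simp add: field_simps)
    then have "1 / real (Suc n) \<le> 2 / L * a n / real (Suc n)"
      by (rule divide_right_mono) simp
    then show ?case
      by (simp add: inverse_eq_divide)
  qed
  then have "summable (\<lambda>n. inverse (real (Suc n)))"
    by (rule summable_comparison_test_ev) (intro summable_mult summable)
  then show False
    using not_summable_harmonic[where 'a = real] summable_Suc_iff[of "\<lambda>n. inverse (real n)"] by simp
qed

lemma harmonic_decay_tendsto_zero:
  fixes a P :: "nat \<Rightarrow> real"
  assumes nonneg: "\<And>n. 0 \<le> a n" and c: "0 < c" and K: "0 \<le> K"
    and P: "incseq P" "\<And>n. P n \<le> M"
    and decay: "\<And>n. a (Suc n) \<le> a n - c * (a n / real (Suc n)) + K * (P (Suc n) - P n)"
  shows "a \<longlonglongrightarrow> 0"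
proof -
  \<comment> \<open>a - K P decreases and is bounded below, so a converges and the decrements are summable\<close>
  define b where "b n = a n - K * P n" for n
  have b_Suc: "b (Suc n) + c * (a n / real (Suc n)) \<le> b n" for n
    using decay[of n] unfolding b_def by (simp add: algebra_simps)
  have weight_nonneg: "0 \<le> c * (a n / real (Suc n))" for n
    using c nonneg by simp
  have b_lower: "- (K * M) \<le> b n" for n
    using nonneg[of n] mult_left_mono[OF P(2)[of n] K] unfolding b_def by linarith
  have "b (Suc n) \<le> b n" for n
    using b_Suc[of n] weight_nonneg[of n] by linarith
  then have "decseq b"
    by (rule decseq_SucI)
  then obtain Lb where Lb: "b \<longlonglongrightarrow> Lb"
    using decseq_convergent b_lower by blast
  obtain LP where LP: "P \<longlonglongrightarrow> LP"
    using incseq_convergent[OF P(1)] P(2) by blast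
  have lim: "a \<longlonglongrightarrow> Lb + K * LP"
  proof -
    have "a = (\<lambda>n. b n + K * P n)"
      unfolding b_def by simp
    then show ?thesis
      using Lb LP by (simp add: tendsto_intros)
  qed
  have partial: "(\<Sum>i<n. c * (a i / real (Suc i))) \<le> b 0 - b n" for n
  proof (induction n)
    case (Suc n)
    then show ?case
      using b_Suc[of n] by simp
  qed simp
  have "summable (\<lambda>n. c * (a n / real (Suc n)))"
  proof (rule summableI_nonneg_bounded)
    show "(\<Sum>i<n. c * (a i / real (Suc i))) \<le> b 0 + K * M" for n
      using partial[of n] b_lower[of n] by linarith
  qed (rule weight_nonneg)
  then have "summable (\<lambda>n. a n / real (Suc n))"
    using c by (subst (asm) summable_cmult_iff) simp
  then have "Lb + K * LP = 0"
    by (rule limit_zero_if_summable_div_Suc[OF lim nonneg])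
  then show ?thesis
    using lim by simp
qed


section \<open>The local chain at a vertex\<close>

text \<open>absorb_prob d k i s j is the probability that a spreader with s stifling experiences and j
  informed successors ends with exactly i informed successors, when each of its contacts informs a
  new successor with probability (d - j)/(d + 1) and is a stifling experience otherwise.\<close>

function absorb_prob :: "nat \<Rightarrow> nat \<Rightarrow> nat \<Rightarrow> nat \<Rightarrow> nat \<Rightarrow> real" where
  "absorb_prob d k i s j =
    (if k \<le> s then (if j = i then 1 else 0)
     else if j < d then real (d - j) / real (d + 1) * absorb_prob d k i s (Suc j)
                      + real (Suc j) / real (d + 1) * absorb_prob d k i (Suc s) j
     else absorb_prob d k i (Suc s) j)"
  by auto
termination
  by (relation "Wellfounded.measure (\<lambda>(d, k, i, s, j). k - s + (d - j))") auto

declare absorb_prob.simps [simp del]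

lemma absorb_prob_stifler: "k \<le> s \<Longrightarrow> absorb_prob d k i s j = (if j = i then 1 else 0)"
  by (simp add: absorb_prob.simps)

lemma absorb_prob_harmonic:
  assumes "s < k" "j \<le> d"
  shows "real (d + 1) * absorb_prob d k i s j
       = real (d - j) * absorb_prob d k i s (Suc j) + real (Suc j) * absorb_prob d k i (Suc s) j"
proof (cases "j < d")
  case True
  have "absorb_prob d k i s j = real (d - j) / real (d + 1) * absorb_prob d k i s (Suc j)
                      + real (Suc j) / real (d + 1) * absorb_prob d k i (Suc s) j"
    using absorb_prob.simps[of d k i s j] assms True by simp
  then show ?thesis
    by (simp add: distrib_left del: of_nat_add of_nat_Suc)
next
  case False
  then show ?thesis
    using absorb_prob.simps[of d k i s j] assms by simp
qed

lemma absorb_prob_bounds: "0 \<le> absorb_prob d k i s j \<and> absorb_prob d k i s j \<le> 1"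
proof (induction d k i s j rule: absorb_prob.induct)
  case (1 d k i s j)
  consider "k \<le> s" | "s < k" "j < d" | "s < k" "d \<le> j"
    by linarith
  then show ?case
  proof cases
    case 1
    then show ?thesis by (simp add: absorb_prob_stifler)
  next
    case 2
    let ?x = "absorb_prob d k i s (Suc j)" and ?y = "absorb_prob d k i (Suc s) j"
    have x: "0 \<le> ?x" "?x \<le> 1" and y: "0 \<le> ?y" "?y \<le> 1"
      using "1.IH"(1,2) 2 by auto
    have "real (d - j) * ?x \<le> real (d - j)" "real (Suc j) * ?y \<le> real (Suc j)"
      using x y by (simp_all add: mult_left_le)
    moreover have "0 \<le> real (d - j) * ?x" "0 \<le> real (Suc j) * ?y"
      using x y by simp_all
    moreover have "real (d - j) + real (Suc j) = real (d + 1)"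
      using 2 by simp
    ultimately have "0 \<le> real (d + 1) * absorb_prob d k i s j"
      "real (d + 1) * absorb_prob d k i s j \<le> real (d + 1)"
      using absorb_prob_harmonic[OF 2(1) less_imp_le[OF 2(2)], of i] by linarith+
    then show ?thesis
      by (simp add: zero_le_mult_iff mult_le_cancel_left1 del: of_nat_add)
  next
    case 3
    then show ?thesis
      using "1.IH"(3) absorb_prob.simps[of d k i s j] by simp
  qed
qed

lemma absorb_prob_less: "i < j \<Longrightarrow> absorb_prob d k i s j = 0"
  by (induction d k i s j rule: absorb_prob.induct) (subst absorb_prob.simps, auto)

lemma nested_sum_Suc_lower:
  "lo \<le> hi \<Longrightarrow> nested_sum (Suc n) lo hi = lo * nested_sum n lo hi + nested_sum (Suc n) (Suc lo) hi"
  by (simp add: sum.atLeast_Suc_atMost)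

lemma nested_sum_Suc_empty: "hi < lo \<Longrightarrow> nested_sum (Suc n) lo hi = 0"
  by simp

declare nested_sum.simps(2) [simp del]

lemma absorb_prob_closed_form:
  assumes "j \<le> i" "i \<le> d" "s < k"
  shows "absorb_prob d k i s j * real (d + 1) ^ (i - j + k - s) * fact (d - i)
       = fact (d - j) * real (i + 1) * real (nested_sum (k - s - 1) (j + 1) (i + 1))"
  using assms
proof (induction "k - s + (i - j)" arbitrary: s j rule: less_induct)
  case less
  let ?g = "absorb_prob d k i" and ?D = "real (d + 1)" and ?c = "fact (d - i) :: real"
  let ?N = "\<lambda>n lo. real (nested_sum n lo (i + 1))"
  define e where "e = i - j + k - s - 1"
  have e: "i - j + k - s = Suc e"
    using less.prems unfolding e_def by simp
  have new_succ: "real (d - j) * (?g s (Suc j) * ?D ^ e * ?c)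
         = (if j < i then fact (d - j) * real (i + 1) * ?N (k - s - 1) (j + 2) else 0)"
  proof (cases "j < i")
    case True
    have "?g s (Suc j) * ?D ^ e * ?c = fact (d - Suc j) * real (i + 1) * ?N (k - s - 1) (j + 2)"
      using less.hyps[of s "Suc j"] less.prems True by (simp add: e_def Suc_diff_Suc)
    moreover have "real (d - j) * fact (d - Suc j) = (fact (d - j) :: real)"
      using True less.prems by (simp add: fact_reduce[of "d - j"] Suc_diff_Suc)
    ultimately show ?thesis
      using True by simp
  qed (simp add: absorb_prob_less)
  have stifling: "?g (Suc s) j * ?D ^ e * ?c
         = (if Suc s < k then fact (d - j) * real (i + 1) * ?N (k - s - 2) (j + 1)
            else if j = i then fact (d - j) else 0)"
  proof (cases "Suc s < k")
    case True
    have "i - j + k - Suc s = e" "k - Suc s - 1 = k - s - 2"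
      unfolding e_def by simp_all
    then show ?thesis
      using less.hyps[of "Suc s" j] less.prems True by simp
  next
    case False
    then have "k = Suc s"
      using less.prems by simp
    then show ?thesis
      using less.prems by (simp add: absorb_prob_stifler e_def)
  qed
  have "?g s j * ?D ^ (i - j + k - s) * ?c
      = real (d - j) * (?g s (Suc j) * ?D ^ e * ?c) + real (Suc j) * (?g (Suc s) j * ?D ^ e * ?c)"
  proof -
    have "?g s j * ?D ^ (i - j + k - s) * ?c = (?D * ?g s j) * ?D ^ e * ?c"
      unfolding e by (simp only: power_Suc mult_ac)
    also have "\<dots> = real (d - j) * (?g s (Suc j) * ?D ^ e * ?c) + real (Suc j) * (?g (Suc s) j * ?D ^ e * ?c)"
      unfolding absorb_prob_harmonic[OF less.prems(3) le_trans[OF less.prems(1,2)]]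
      by (simp add: algebra_simps)
    finally show ?thesis .
  qed
  also have "\<dots> = fact (d - j) * real (i + 1) * ?N (k - s - 1) (j + 1)"
  proof (cases "Suc s < k")
    case True
    define m where "m = k - s - 2"
    have m: "k - s - 1 = Suc m" "k - s - 2 = m"
      using True unfolding m_def by simp_all
    have "?N (Suc m) (j + 1) = real (Suc j) * ?N m (j + 1) + ?N (Suc m) (j + 2)"
      using nested_sum_Suc_lower[of "j + 1" "i + 1" m] less.prems by (simp add: algebra_simps)
    moreover have "?N (Suc m) (j + 2) = 0" if "\<not> j < i"
      using that less.prems by (simp add: nested_sum_Suc_empty)
    ultimately show ?thesis
      unfolding new_succ stifling m using True by (cases "j < i") (simp_all only: if_True if_False, simp_all add: ring_distribs)
  next
    case False
    then have "k - s - 1 = 0" "\<not> Suc s < k"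
      by simp_all
    then show ?thesis
      unfolding new_succ stifling using less.prems by (cases "j < i") (simp_all only: if_True if_False, simp_all)
  qed
  finally show ?case .
qed

lemma absorb_prob_0_0:
  assumes "i \<le> d" "1 \<le> k"
  shows "absorb_prob d k i 0 0
       = real (d choose i) * fact (i + 1) / real (d + 1) ^ (i + k) * real (S_ik i k)"
proof -
  have "fact (d - i) * (absorb_prob d k i 0 0 * real (d + 1) ^ (i + k))
      = fact d * real (i + 1) * real (S_ik i k)"
    using absorb_prob_closed_form[of 0 i d 0 k] assms unfolding S_ik_def by (simp add: mult_ac)
  also have "\<dots> = fact (d - i) * (real (d choose i) * fact (i + 1) * real (S_ik i k))"
  proof -
    have b: "fact i * fact (d - i) * real (d choose i) = (fact d :: real)"
      using binomial_fact_lemma[OF assms(1)] by (metis of_nat_fact of_nat_mult)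
    show ?thesis
      unfolding b[symmetric] by (simp add: algebra_simps)
  qed
  finally have "absorb_prob d k i 0 0 * real (d + 1) ^ (i + k) = real (d choose i) * fact (i + 1) * real (S_ik i k)"
    by (rule mult_left_cancel[THEN iffD1, rotated]) simp
  then show ?thesis
    by (simp add: eq_divide_eq)
qed

definition absorb_mean :: "nat \<Rightarrow> nat \<Rightarrow> nat \<Rightarrow> nat \<Rightarrow> real" where
  "absorb_mean d k s j = (\<Sum>i = 0..d. real i * absorb_prob d k i s j)"

lemma absorb_mean_stifler:
  assumes "k \<le> s" "j \<le> d"
  shows "absorb_mean d k s j = real j"
proof -
  have "absorb_mean d k s j = (\<Sum>i = 0..d. if j = i then real i else 0)"
    unfolding absorb_mean_def absorb_prob_stifler[OF assms(1)] by (intro sum.cong) auto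
  also have "\<dots> = real j"
    using assms(2) by simp
  finally show ?thesis .
qed

lemma absorb_mean_harmonic:
  assumes "s < k" "j \<le> d"
  shows "real (d + 1) * absorb_mean d k s j
       = real (d - j) * absorb_mean d k s (Suc j) + real (Suc j) * absorb_mean d k (Suc s) j"
proof -
  have "real (d + 1) * (real i * absorb_prob d k i s j)
      = real (d - j) * (real i * absorb_prob d k i s (Suc j))
        + real (Suc j) * (real i * absorb_prob d k i (Suc s) j)" for i
    using absorb_prob_harmonic[OF assms, of i] by (metis distrib_left mult.left_commute)
  then show ?thesis
    unfolding absorb_mean_def sum_distrib_left sum.distrib[symmetric] by (rule sum.cong[OF refl])
qed

lemma absorb_mean_ge: "j \<le> d \<Longrightarrow> real j \<le> absorb_mean d k s j"
proof (induction "k - s + (d - j)" arbitrary: s j rule: less_induct)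
  case less
  show ?case
  proof (cases "s < k")
    case False
    then show ?thesis
      using absorb_mean_stifler less.prems by simp
  next
    case True
    have "real (d - j) * real (Suc j) \<le> real (d - j) * absorb_mean d k s (Suc j)"
    proof (cases "j < d")
      case True
      then show ?thesis
        using less.hyps[of s "Suc j"] by (intro mult_left_mono) auto
    qed simp
    moreover have "real (Suc j) * real j \<le> real (Suc j) * absorb_mean d k (Suc s) j"
      using less.hyps[of "Suc s" j] less.prems True by (intro mult_left_mono) simp_all
    moreover have "real (d + 1) * real j \<le> real (d - j) * real (Suc j) + real (Suc j) * real j"
      using less.prems by (simp add: of_nat_diff algebra_simps)
    ultimately have "real (d + 1) * real j \<le> real (d + 1) * absorb_mean d k s j"
      unfolding absorb_mean_harmonic[OF True less.prems] by linarith
    then show ?thesis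
      by (rule mult_left_le_imp_le) simp
  qed
qed

lemma absorb_mean_0_0_gt_1:
  assumes "2 \<le> k" "2 \<le> d"
  shows "1 < absorb_mean d k 0 0"
proof -
  let ?m = "absorb_mean d k" and ?D = "real (d + 1)"
  have "?D * ?m 0 1 = real (d - 1) * ?m 0 2 + 2 * ?m 1 1"
    using absorb_mean_harmonic[of 0 k 1 d] assms by (simp add: numeral_2_eq_2)
  moreover have "real (d - 1) * 2 \<le> real (d - 1) * ?m 0 2" "2 * 1 \<le> 2 * ?m 1 1"
    using absorb_mean_ge[of 2 d k 0] absorb_mean_ge[of 1 d k 1] assms
    by (intro mult_left_mono; simp)+
  ultimately have m01: "2 * real d \<le> ?D * ?m 0 1"
    using assms by (simp add: of_nat_diff)
  have "?D * ?m 1 0 = real d * ?m 1 1 + ?m 2 0"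
    using absorb_mean_harmonic[of 1 k 0 d] assms by (simp add: numeral_2_eq_2)
  moreover have "real d * 1 \<le> real d * ?m 1 1" "0 \<le> ?m 2 0"
    using absorb_mean_ge[of 1 d k 1] absorb_mean_ge[of 0 d k 2] assms
    by (simp_all add: mult_left_mono)
  ultimately have m10: "real d \<le> ?D * ?m 1 0"
    by linarith
  have "?D * ?m 0 0 = real d * ?m 0 1 + ?m 1 0"
    using absorb_mean_harmonic[of 0 k 0 d] assms by simp
  then have "?D * (?D * ?m 0 0) = real d * (?D * ?m 0 1) + ?D * ?m 1 0"
    by (simp add: algebra_simps)
  moreover have "real d * (2 * real d) \<le> real d * (?D * ?m 0 1)"
    using m01 by (intro mult_left_mono) simp_all
  moreover have "?D * ?D < real d * (2 * real d) + real d"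
  proof -
    have "2 \<le> real d"
      using assms by simp
    moreover from this have "2 * real d \<le> real d * real d"
      by (intro mult_right_mono) auto
    moreover have "?D * ?D = real d * real d + 2 * real d + 1"
      by (simp add: algebra_simps)
    ultimately show ?thesis
      by linarith
  qed
  ultimately have "?D * ?D * 1 < ?D * ?D * ?m 0 0"
    using m10 by (simp add: mult.assoc)
  then show ?thesis
    by (rule mult_left_less_imp_less) simp
qed


section \<open>Configurations reachable by the jump chain\<close>

lemma succs_conv_image: "succs d u = (\<lambda>c. c # u) ` {..<nsucc d u}"
  unfolding succs_def by auto

lemma finite_succs [simp]: "finite (succs d u)"
  unfolding succs_conv_image by simp

lemma card_succs: "card (succs d u) = nsucc d u"
  unfolding succs_conv_image by (subst card_image) (auto simp: inj_on_def)

lemma finite_nbrs [simp]: "finite (nbrs d u)"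
  unfolding nbrs_def by simp

lemma tl_notin_succs: "tl u \<notin> succs d u"
  unfolding succs_def by (auto dest: arg_cong[of _ _ length])

lemma nbrs_nonroot: "u \<noteq> [] \<Longrightarrow> nbrs d u = insert (tl u) (succs d u)"
  unfolding nbrs_def by simp

lemma card_nbrs_nonroot: "u \<noteq> [] \<Longrightarrow> card (nbrs d u) = d + 1"
  by (simp add: nbrs_nonroot tl_notin_succs card_succs nsucc_def)

lemma card_nbrs_le: "card (nbrs d u) \<le> d + 1"
proof (cases "u = []")
  case True
  then show ?thesis
    by (simp add: nbrs_def card_succs nsucc_def)
qed (simp add: card_nbrs_nonroot)

lemma mem_nbrsD: "y \<in> nbrs d x \<Longrightarrow> (y \<noteq> [] \<and> tl y = x) \<or> (x \<noteq> [] \<and> y = tl x)"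
  unfolding nbrs_def succs_def by (auto split: if_splits)

definition cfg_inv :: "nat \<Rightarrow> nat \<Rightarrow> config \<Rightarrow> bool" where
  "cfg_inv k n \<eta> \<longleftrightarrow> (\<forall>x. -1 \<le> \<eta> x \<and> \<eta> x \<le> int k)
     \<and> finite {x. \<eta> x \<noteq> -1} \<and> card {x. \<eta> x \<noteq> -1} \<le> Suc n
     \<and> (\<forall>x. x \<noteq> [] \<longrightarrow> \<eta> x \<noteq> -1 \<longrightarrow> \<eta> (tl x) \<noteq> -1)"

lemma cfg_inv_range: "cfg_inv k n \<eta> \<Longrightarrow> -1 \<le> \<eta> x \<and> \<eta> x \<le> int k"
  unfolding cfg_inv_def by blast

lemma cfg_inv_parent: "cfg_inv k n \<eta> \<Longrightarrow> x \<noteq> [] \<Longrightarrow> \<eta> x \<noteq> -1 \<Longrightarrow> \<eta> (tl x) \<noteq> -1"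
  unfolding cfg_inv_def by blast

lemma spreader_informed: "spreader k \<eta> x \<Longrightarrow> \<eta> x \<noteq> -1"
  unfolding spreader_def by auto

lemma contacts_subset: "contacts d k \<eta> \<subseteq> Sigma {x. \<eta> x \<noteq> -1} (nbrs d)"
  unfolding contacts_def using spreader_informed by blast

lemma finite_contacts: "cfg_inv k n \<eta> \<Longrightarrow> finite (contacts d k \<eta>)"
  unfolding cfg_inv_def by (auto intro: finite_subset[OF contacts_subset])

lemma card_contacts_le:
  assumes "cfg_inv k n \<eta>"
  shows "card (contacts d k \<eta>) \<le> (d + 1) * Suc n"
proof -
  let ?I = "{x. \<eta> x \<noteq> -1}"
  have I: "finite ?I" "card ?I \<le> Suc n"
    using assms unfolding cfg_inv_def by auto
  have "card (contacts d k \<eta>) \<le> card (Sigma ?I (nbrs d))"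
    using I by (intro card_mono contacts_subset) auto
  also have "\<dots> = (\<Sum>x\<in>?I. card (nbrs d x))"
    using I by (simp add: card_SigmaI)
  also have "\<dots> \<le> (\<Sum>x\<in>?I. d + 1)"
    by (intro sum_mono card_nbrs_le)
  also have "\<dots> = (d + 1) * card ?I"
    by simp
  also have "\<dots> \<le> (d + 1) * Suc n"
    using I(2) by (rule mult_le_mono2)
  finally show ?thesis .
qed

lemma contact_update_ignorant: "\<eta> y = -1 \<Longrightarrow> contact_update \<eta> (x, y) = \<eta>(y := 0)"
  unfolding contact_update_def by simp

lemma contact_update_informed: "\<eta> y \<noteq> -1 \<Longrightarrow> contact_update \<eta> (x, y) = \<eta>(x := \<eta> x + 1)"
  unfolding contact_update_def by simp

lemma contact_ignorant_succ:
  assumes inv: "cfg_inv k n \<eta>" and p: "(x, y) \<in> contacts d k \<eta>" and y: "\<eta> y = -1"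
  shows "y \<noteq> [] \<and> tl y = x"
proof -
  have "y \<in> nbrs d x" "\<eta> x \<noteq> -1"
    using p spreader_informed unfolding contacts_def by auto
  then show ?thesis
    using mem_nbrsD cfg_inv_parent[OF inv] y by metis
qed

lemma cfg_inv_contact_update:
  assumes inv: "cfg_inv k n \<eta>" and p: "(x, y) \<in> contacts d k \<eta>"
  shows "cfg_inv k (Suc n) (contact_update \<eta> (x, y))"
proof -
  have x: "0 \<le> \<eta> x" "\<eta> x < int k"
    using p unfolding contacts_def spreader_def by auto
  show ?thesis
  proof (cases "\<eta> y = -1")
    case True
    have "{z. (\<eta>(y := 0)) z \<noteq> -1} = insert y {z. \<eta> z \<noteq> -1}"
      by auto
    moreover have "y \<noteq> [] \<and> \<eta> (tl y) \<noteq> -1"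
      using contact_ignorant_succ[OF inv p True] x by auto
    ultimately show ?thesis
      using inv True unfolding contact_update_ignorant[of \<eta> y x, OF True] cfg_inv_def
      by (auto simp: card_insert_if)
  next
    case False
    have "{z. (\<eta>(x := \<eta> x + 1)) z \<noteq> -1} = {z. \<eta> z \<noteq> -1}"
      using x by auto
    then show ?thesis
      using inv x unfolding contact_update_informed[of \<eta> y x, OF False] cfg_inv_def by auto
  qed
qed

lemma set_pmf_mt_stepD:
  "\<eta>' \<in> set_pmf (mt_step d k \<eta>) \<Longrightarrow> \<eta>' = \<eta> \<or> (\<exists>p\<in>contacts d k \<eta>. \<eta>' = contact_update \<eta> p)"
  unfolding mt_step_def by (auto split: if_splits)

lemma cfg_inv_mt_cfg: "\<eta> \<in> set_pmf (mt_cfg d k n) \<Longrightarrow> cfg_inv k n \<eta>"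
proof (induction n arbitrary: \<eta>)
  case 0
  have "{x. init_cfg x \<noteq> -1} = {[]}"
    unfolding init_cfg_def by auto
  then show ?case
    using 0 unfolding cfg_inv_def by (auto simp: init_cfg_def)
next
  case (Suc n)
  then obtain \<eta>0 where \<eta>0: "cfg_inv k n \<eta>0" "\<eta> \<in> set_pmf (mt_step d k \<eta>0)"
    by auto
  have "cfg_inv k (Suc n) \<eta>0"
    using \<eta>0(1) unfolding cfg_inv_def by auto
  then show ?case
    using set_pmf_mt_stepD[OF \<eta>0(2)] cfg_inv_contact_update[OF \<eta>0(1)] by auto
qed

lemma AE_cfg_inv: "AE \<eta> in measure_pmf (mt_cfg d k n). cfg_inv k n \<eta>"
  by (rule AE_pmfI) (rule cfg_inv_mt_cfg)

lemma informed_mt_step: "\<eta>' \<in> set_pmf (mt_step d k \<eta>) \<Longrightarrow> \<eta> z \<noteq> -1 \<Longrightarrow> \<eta>' z \<noteq> -1"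
  by (auto dest!: set_pmf_mt_stepD simp: contacts_def contact_update_def spreader_def split: if_splits)

lemma expectation_mt_step:
  assumes "contacts d k \<eta> \<noteq> {}" "finite (contacts d k \<eta>)"
  shows "measure_pmf.expectation (mt_step d k \<eta>) f
       = (\<Sum>p\<in>contacts d k \<eta>. f (contact_update \<eta> p)) / real (card (contacts d k \<eta>))"
  using assms unfolding mt_step_def by (simp add: integral_pmf_of_set)

lemma fresh_spreader_reachable:
  assumes "0 < k" "tvert d u"
  shows "\<exists>n. \<exists>\<eta>\<in>set_pmf (mt_cfg d k n). \<eta> u = 0 \<and> (\<forall>c. \<eta> (c # u) = -1)"
  using assms(2)
proof (induction u)
  case Nil
  have "init_cfg \<in> set_pmf (mt_cfg d k 0)"
    by simp
  then show ?case
    by (intro exI[of _ 0] bexI[of _ init_cfg]) (simp_all add: init_cfg_def)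
next
  case (Cons c u)
  then obtain n \<eta> where \<eta>: "\<eta> \<in> set_pmf (mt_cfg d k n)" "\<eta> u = 0" "\<forall>c. \<eta> (c # u) = -1"
    by auto
  have inv: "cfg_inv k n \<eta>"
    using cfg_inv_mt_cfg[OF \<eta>(1)] .
  have p: "(u, c # u) \<in> contacts d k \<eta>"
    using Cons.prems \<eta>(2) assms(1) unfolding contacts_def spreader_def nbrs_def succs_def by auto
  have "\<eta>(c # u := 0) \<in> set_pmf (mt_step d k \<eta>)"
    using p finite_contacts[OF inv] \<eta>(3) unfolding mt_step_def
    by (auto intro!: image_eqI[of _ _ "(u, c # u)"] simp: contact_update_ignorant)
  then have "\<eta>(c # u := 0) \<in> set_pmf (mt_cfg d k (Suc n))"
    using \<eta>(1) by auto
  moreover have "\<eta> (c' # c # u) = -1" for c'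
    using cfg_inv_parent[OF inv, of "c' # c # u"] \<eta>(3) by auto
  ultimately show ?case
    by (intro exI[of _ "Suc n"] bexI[of _ "\<eta>(c # u := 0)"]) auto
qed


section \<open>The process seen from a vertex\<close>

text \<open>(d + 1) times the generator of the local chain, applied to F at the spreader state (s, j).\<close>

definition local_gen :: "nat \<Rightarrow> (int \<Rightarrow> nat \<Rightarrow> real) \<Rightarrow> int \<Rightarrow> nat \<Rightarrow> real" where
  "local_gen d F s j = real (d - j) * F s (Suc j) + real (Suc j) * F (s + 1) j - real (d + 1) * F s j"

locale mt_vertex =
  fixes d k :: nat and v :: "nat list"
  assumes k_pos: "0 < k" and tvert_v: "tvert d v" and v_nonroot: "v \<noteq> []"
begin

definition informed_succs :: "config \<Rightarrow> nat list set" where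
  "informed_succs \<eta> = {c \<in> succs d v. \<eta> c \<noteq> -1}"

text \<open>The local state of v (its own state, its number of informed successors) plays the role
  of the parameters (s, j) of absorb_prob.\<close>

definition view :: "(int \<Rightarrow> nat \<Rightarrow> real) \<Rightarrow> config \<Rightarrow> real" where
  "view F \<eta> = F (\<eta> v) (card (informed_succs \<eta>))"

definition drift :: "(int \<Rightarrow> nat \<Rightarrow> real) \<Rightarrow> config \<Rightarrow> real" where
  "drift F \<eta> = measure_pmf.expectation (mt_step d k \<eta>) (view F) - view F \<eta>"

lemma card_informed_succs_le: "card (informed_succs \<eta>) \<le> d"
proof -
  have "card (informed_succs \<eta>) \<le> card (succs d v)"
    unfolding informed_succs_def by (intro card_mono) auto
  then show ?thesis
    using v_nonroot by (simp add: card_succs nsucc_def)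
qed

lemma view_cong: "\<eta>' v = \<eta> v \<Longrightarrow> informed_succs \<eta>' = informed_succs \<eta> \<Longrightarrow> view F \<eta>' = view F \<eta>"
  unfolding view_def by simp

lemma informed_succs_update_other: "x \<notin> succs d v \<Longrightarrow> informed_succs (\<eta>(x := a)) = informed_succs \<eta>"
  unfolding informed_succs_def by auto

lemma view_contact_update_other:
  assumes inv: "cfg_inv k n \<eta>" and v: "\<eta> v \<noteq> -1"
    and p: "(x, y) \<in> contacts d k \<eta>" and "x \<noteq> v"
  shows "view F (contact_update \<eta> (x, y)) = view F \<eta>"
proof (cases "\<eta> y = -1")
  case True
  then have "y \<noteq> v" "y \<notin> succs d v"
    using contact_ignorant_succ[OF inv p True] v \<open>x \<noteq> v\<close> unfolding succs_def by auto
  then show ?thesis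
    unfolding contact_update_ignorant[of \<eta> y x, OF True]
    by (intro view_cong) (simp_all add: informed_succs_update_other)
next
  case False
  have "0 \<le> \<eta> x"
    using p unfolding contacts_def spreader_def by auto
  then have "informed_succs (\<eta>(x := \<eta> x + 1)) = informed_succs \<eta>"
    unfolding informed_succs_def by auto
  then show ?thesis
    unfolding contact_update_informed[of \<eta> y x, OF False]
    using \<open>x \<noteq> v\<close> by (intro view_cong) simp_all
qed

lemma informed_succs_ignorant:
  assumes inv: "cfg_inv k n \<eta>" and v: "\<eta> v = -1"
  shows "informed_succs \<eta> = {}"
proof -
  have "\<eta> c = -1" if "c \<in> succs d v" for c
  proof (rule ccontr)
    assume "\<eta> c \<noteq> -1"
    moreover have "c \<noteq> []" "tl c = v"
      using that unfolding succs_def by auto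
    ultimately show False
      using cfg_inv_parent[OF inv] v by metis
  qed
  then show ?thesis
    unfolding informed_succs_def by auto
qed

lemma mt_step_from_ignorant:
  assumes inv: "cfg_inv k n \<eta>" and v: "\<eta> v = -1" and \<eta>': "\<eta>' \<in> set_pmf (mt_step d k \<eta>)"
  shows "(\<eta>' v = -1 \<or> \<eta>' v = 0) \<and> informed_succs \<eta>' = {}"
proof -
  have "\<eta>' v \<in> {-1, 0} \<and> informed_succs \<eta>' = informed_succs \<eta>"
    if p: "(x, y) \<in> contacts d k \<eta>" and \<eta>': "\<eta>' = contact_update \<eta> (x, y)" for x y
  proof -
    have x: "\<eta> x \<noteq> -1" "x \<noteq> v"
      using p v spreader_informed unfolding contacts_def by auto
    show ?thesis
    proof (cases "\<eta> y = -1")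
      case True
      then have "y \<notin> succs d v"
        using contact_ignorant_succ[OF inv p True] x unfolding succs_def by auto
      then show ?thesis
        using v unfolding \<eta>' contact_update_ignorant[of \<eta> y x, OF True]
        by (simp add: informed_succs_update_other)
    next
      case False
      have "x \<notin> succs d v"
        using informed_succs_ignorant[OF inv v] x unfolding informed_succs_def by auto
      then show ?thesis
        using v x unfolding \<eta>' contact_update_informed[of \<eta> y x, OF False]
        by (simp add: informed_succs_update_other)
    qed
  qed
  then show ?thesis
    using set_pmf_mt_stepD[OF \<eta>'] informed_succs_ignorant[OF inv v] v by auto
qed

lemma drift_not_spreader:
  assumes inv: "cfg_inv k n \<eta>" and v: "\<eta> v \<noteq> -1" "\<not> spreader k \<eta> v"
  shows "drift F \<eta> = 0"
proof (cases "contacts d k \<eta> = {}")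
  case True
  then show ?thesis
    unfolding drift_def mt_step_def by simp
next
  case False
  have "view F (contact_update \<eta> p) = view F \<eta>" if "p \<in> contacts d k \<eta>" for p
    using that v view_contact_update_other[OF inv v(1)] unfolding contacts_def by auto
  then show ?thesis
    unfolding drift_def expectation_mt_step[OF False finite_contacts[OF inv]]
    using False finite_contacts[OF inv] by simp
qed

lemma sum_view_contacts_of_v:
  assumes inv: "cfg_inv k n \<eta>" and sv: "spreader k \<eta> v"
  shows "(\<Sum>y\<in>nbrs d v. view F (contact_update \<eta> (v, y)))
       = real (d - card (informed_succs \<eta>)) * F (\<eta> v) (Suc (card (informed_succs \<eta>)))
         + real (Suc (card (informed_succs \<eta>))) * F (\<eta> v + 1) (card (informed_succs \<eta>))"
proof -
  let ?I = "informed_succs \<eta>"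
  have I: "?I \<subseteq> succs d v" "finite ?I"
    unfolding informed_succs_def by auto
  have fresh: "view F (contact_update \<eta> (v, y)) = F (\<eta> v) (Suc (card ?I))"
    if "y \<in> succs d v - ?I" for y
  proof -
    have y: "\<eta> y = -1" "y \<noteq> v"
      using that sv spreader_informed unfolding informed_succs_def by auto
    moreover have "informed_succs (\<eta>(y := 0)) = insert y ?I"
      using that unfolding informed_succs_def by auto
    ultimately show ?thesis
      using that I(2) unfolding view_def contact_update_ignorant[of \<eta> y v, OF y(1)] by simp
  qed
  have stifling: "view F (contact_update \<eta> (v, y)) = F (\<eta> v + 1) (card ?I)" if "\<eta> y \<noteq> -1" for y
    using that tl_notin_succs[of v d]
    unfolding view_def contact_update_informed[of \<eta> y v, OF that]
    by (simp add: informed_succs_update_other[of v] succs_def)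
  have "(\<Sum>y\<in>nbrs d v. view F (contact_update \<eta> (v, y)))
      = view F (contact_update \<eta> (v, tl v)) + (\<Sum>y\<in>succs d v - ?I. view F (contact_update \<eta> (v, y)))
        + (\<Sum>y\<in>?I. view F (contact_update \<eta> (v, y)))"
    using tl_notin_succs[of v d] sum.subset_diff[OF I(1)] by (simp add: nbrs_nonroot[OF v_nonroot])
  also have "\<dots> = F (\<eta> v + 1) (card ?I) + real (card (succs d v - ?I)) * F (\<eta> v) (Suc (card ?I))
        + real (card ?I) * F (\<eta> v + 1) (card ?I)"
    using stifling[of "tl v"] cfg_inv_parent[OF inv v_nonroot spreader_informed[OF sv]]
    by (simp add: fresh stifling informed_succs_def)
  also have "card (succs d v - ?I) = d - card ?I"
    using I v_nonroot by (simp add: card_Diff_subset card_succs nsucc_def)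
  finally show ?thesis
    by (simp add: algebra_simps)
qed

lemma drift_spreader:
  assumes inv: "cfg_inv k n \<eta>" and sv: "spreader k \<eta> v"
  shows "drift F \<eta> = local_gen d F (\<eta> v) (card (informed_succs \<eta>)) / real (card (contacts d k \<eta>))"
proof -
  let ?C = "contacts d k \<eta>" and ?Cv = "Pair v ` nbrs d v"
  let ?f = "\<lambda>p. view F (contact_update \<eta> p)" and ?j = "card (informed_succs \<eta>)"
  have fin: "finite ?C"
    by (rule finite_contacts[OF inv])
  have Cv: "?Cv \<subseteq> ?C"
    using tvert_v sv unfolding contacts_def by auto
  have card_Cv: "card ?Cv = d + 1"
    using card_nbrs_nonroot[OF v_nonroot] by (simp add: card_image inj_on_def)
  then have C: "?C \<noteq> {}" "d + 1 \<le> card ?C"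
    using card_mono[OF fin Cv] by auto
  have others: "(\<Sum>p\<in>?C - ?Cv. ?f p) = real (card ?C - (d + 1)) * view F \<eta>"
  proof -
    have "?f p = view F \<eta>" if "p \<in> ?C - ?Cv" for p
      using that view_contact_update_other[OF inv spreader_informed[OF sv]] nbrs_def
      unfolding contacts_def by fastforce
    then show ?thesis
      using card_Diff_subset[OF finite_subset[OF Cv fin] Cv] card_Cv by simp
  qed
  have own: "(\<Sum>p\<in>?Cv. ?f p) = (\<Sum>y\<in>nbrs d v. view F (contact_update \<eta> (v, y)))"
    by (simp add: sum.reindex inj_on_def)
  have "(\<Sum>p\<in>?C. ?f p) = (\<Sum>p\<in>?C - ?Cv. ?f p) + (\<Sum>p\<in>?Cv. ?f p)"
    by (rule sum.subset_diff[OF Cv fin])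
  also have "\<dots> = real (card ?C - (d + 1)) * view F \<eta>
      + (real (d - ?j) * F (\<eta> v) (Suc ?j) + real (Suc ?j) * F (\<eta> v + 1) ?j)"
    unfolding others own sum_view_contacts_of_v[OF inv sv] ..
  also have "\<dots> = real (card ?C) * view F \<eta> + local_gen d F (\<eta> v) ?j"
    unfolding local_gen_def view_def using C(2) by (simp add: of_nat_diff algebra_simps)
  finally show ?thesis
    unfolding drift_def expectation_mt_step[OF C(1) fin] using C by (simp add: field_simps)
qed

lemma view_bounds: "\<forall>s j. F s j \<in> {0..B} \<Longrightarrow> view F \<eta> \<in> {0..B}"
  unfolding view_def by blast

lemma integrable_view: "\<forall>s j. F s j \<in> {0..B} \<Longrightarrow> integrable (measure_pmf p) (view F)"
  using view_bounds[of F B] by (intro measure_pmf.integrable_const_bound[where B = B]) auto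

lemma expectation_view_bounds:
  "\<forall>s j. F s j \<in> {0..B} \<Longrightarrow> measure_pmf.expectation p (view F) \<in> {0..B}"
  using view_bounds[of F B] integrable_view[of F B p]
  by (auto intro!: integral_nonneg measure_pmf.integral_le_const)

lemma integrable_drift:
  assumes "\<forall>s j. F s j \<in> {0..B}"
  shows "integrable (measure_pmf p) (drift F)"
proof -
  have "\<bar>drift F \<eta>\<bar> \<le> B" for \<eta>
    using view_bounds[OF assms, of \<eta>] expectation_view_bounds[OF assms, of "mt_step d k \<eta>"]
    unfolding drift_def by auto
  then show ?thesis
    by (intro measure_pmf.integrable_const_bound[where B = B]) auto
qed

definition informed_ind :: "int \<Rightarrow> nat \<Rightarrow> real" where
  "informed_ind s j = (if s = -1 then 0 else 1)"

definition absorb_view :: "nat \<Rightarrow> int \<Rightarrow> nat \<Rightarrow> real" where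
  "absorb_view i s j = (if s = -1 then 0 else absorb_prob d k i (nat s) j)"

definition final_ind :: "nat \<Rightarrow> int \<Rightarrow> nat \<Rightarrow> real" where
  "final_ind i s j = (if s = -1 then 0 else if j = i then 1 else 0)"

text \<open>An upper bound on the number of contacts that v still makes; each of them lowers it by at
  least one.\<close>

definition pending :: "int \<Rightarrow> nat \<Rightarrow> real" where
  "pending s j = (if 0 \<le> s \<and> s < int k then of_int (int k - s) + real (d - j) else 0)"

lemma informed_ind_bounds: "\<forall>s j. informed_ind s j \<in> {0..1}"
  unfolding informed_ind_def by simp

lemma absorb_view_bounds: "\<forall>s j. absorb_view i s j \<in> {0..1}"
  unfolding absorb_view_def using absorb_prob_bounds by simp

lemma final_ind_bounds: "\<forall>s j. final_ind i s j \<in> {0..1}"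
  unfolding final_ind_def by simp

lemma pending_bounds: "\<forall>s j. pending s j \<in> {0..real (k + d)}"
  unfolding pending_def by auto

lemma local_gen_informed_ind: "0 \<le> s \<Longrightarrow> j \<le> d \<Longrightarrow> local_gen d informed_ind s j = 0"
  unfolding local_gen_def informed_ind_def by (simp add: of_nat_diff)

lemma local_gen_absorb_view:
  "0 \<le> s \<Longrightarrow> s < int k \<Longrightarrow> j \<le> d \<Longrightarrow> local_gen d (absorb_view i) s j = 0"
  unfolding local_gen_def absorb_view_def
  using absorb_prob_harmonic[of "nat s" k j d i] by (simp add: nat_add_distrib)

lemma local_gen_pending:
  assumes "0 \<le> s" "s < int k" "j \<le> d"
  shows "local_gen d pending s j \<le> - real (d + 1)"
proof -
  have "real (d - j) * pending s (Suc j) \<le> real (d - j) * (pending s j - 1)"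
    using assms by (cases "j < d") (simp_all add: pending_def of_nat_diff)
  moreover have "pending (s + 1) j \<le> pending s j - 1"
    using assms by (simp add: pending_def)
  then have "real (Suc j) * pending (s + 1) j \<le> real (Suc j) * (pending s j - 1)"
    by (rule mult_left_mono) simp
  moreover have "real (d - j) * (pending s j - 1) + real (Suc j) * (pending s j - 1)
      - real (d + 1) * pending s j = - real (d + 1)"
    using assms(3) by (simp add: of_nat_diff algebra_simps)
  ultimately show ?thesis
    unfolding local_gen_def by linarith
qed

lemma drift_informed: "\<eta> v \<noteq> -1 \<Longrightarrow> drift informed_ind \<eta> = 0"
proof -
  assume v: "\<eta> v \<noteq> -1"
  have "AE \<eta>' in measure_pmf (mt_step d k \<eta>). view informed_ind \<eta>' = 1"
    using informed_mt_step[of _ d k \<eta> v] v by (simp add: AE_measure_pmf_iff view_def informed_ind_def)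
  then show ?thesis
    using v unfolding drift_def by (simp add: integral_cong_AE view_def informed_ind_def)
qed

lemma drift_from_ignorant:
  assumes inv: "cfg_inv k n \<eta>" and v: "\<eta> v = -1" and F: "F (-1) 0 = 0"
  shows "drift F \<eta> = F 0 0 * drift informed_ind \<eta>"
proof -
  have "view F \<eta>' = F 0 0 * view informed_ind \<eta>'" if "\<eta>' \<in> set_pmf (mt_step d k \<eta>)" for \<eta>'
    using mt_step_from_ignorant[OF inv v that] F
    by (elim conjE disjE) (simp_all add: view_def informed_ind_def)
  then have "AE \<eta>' in measure_pmf (mt_step d k \<eta>). view F \<eta>' = F 0 0 * view informed_ind \<eta>'"
    by (simp add: AE_measure_pmf_iff)
  then show ?thesis
    using v F informed_succs_ignorant[OF inv v] unfolding drift_def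
    by (simp add: integral_cong_AE view_def informed_ind_def)
qed

lemma drift_informed_ind_nonneg:
  assumes "cfg_inv k n \<eta>"
  shows "0 \<le> drift informed_ind \<eta>"
proof (cases "\<eta> v = -1")
  case True
  then show ?thesis
    unfolding drift_def by (simp add: view_def informed_ind_def)
qed (simp add: drift_informed)

lemma drift_absorb_view:
  assumes inv: "cfg_inv k n \<eta>"
  shows "drift (absorb_view i) \<eta> = absorb_prob d k i 0 0 * drift informed_ind \<eta>"
proof -
  consider "\<eta> v = -1" | "\<eta> v \<noteq> -1" "\<not> spreader k \<eta> v" | "spreader k \<eta> v"
    by blast
  then show ?thesis
  proof cases
    case 1
    then show ?thesis
      using drift_from_ignorant[OF inv 1, of "absorb_view i"] by (simp add: absorb_view_def)
  next
    case 2
    then show ?thesis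
      using drift_not_spreader[OF inv] by simp
  next
    case 3
    then show ?thesis
      using drift_spreader[OF inv 3] local_gen_absorb_view local_gen_informed_ind
        card_informed_succs_le
      unfolding spreader_def by simp
  qed
qed

lemma drift_pending_spreader:
  assumes inv: "cfg_inv k n \<eta>" and sv: "spreader k \<eta> v"
  shows "drift pending \<eta> \<le> - 1 / real (Suc n)"
proof -
  let ?c = "real (card (contacts d k \<eta>))"
  have "(v, tl v) \<in> contacts d k \<eta>"
    using tvert_v sv v_nonroot unfolding contacts_def nbrs_def by simp
  then have "0 < ?c"
    using finite_contacts[OF inv] by (auto simp: card_gt_0_iff)
  moreover have "?c \<le> real ((d + 1) * Suc n)"
    using card_contacts_le[OF inv] by (simp only: of_nat_le_iff)
  ultimately have c: "0 < ?c" "?c \<le> real (d + 1) * real (Suc n)"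
    by (simp_all add: algebra_simps)
  have "local_gen d pending (\<eta> v) (card (informed_succs \<eta>)) \<le> - real (d + 1)"
    using sv card_informed_succs_le unfolding spreader_def by (intro local_gen_pending) auto
  then have "drift pending \<eta> \<le> - real (d + 1) / ?c"
    unfolding drift_spreader[OF inv sv] using c(1) by (intro divide_right_mono) auto
  \<comment> \<open>v makes d + 1 of at most (d + 1)(n + 1) equally likely contacts\<close>
  also have "\<dots> \<le> - 1 / real (Suc n)"
    using c by (simp add: field_simps)
  finally show ?thesis .
qed

lemma drift_pending:
  assumes inv: "cfg_inv k n \<eta>"
  shows "drift pending \<eta>
       \<le> real (k + d) * drift informed_ind \<eta> - view pending \<eta> / (real (k + d) * real (Suc n))"
proof -
  consider "\<eta> v = -1" | "\<eta> v \<noteq> -1" "\<not> spreader k \<eta> v" | "spreader k \<eta> v"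
    by blast
  then show ?thesis
  proof cases
    case 1
    then show ?thesis
      using drift_from_ignorant[OF inv 1, of pending] k_pos by (simp add: pending_def view_def)
  next
    case 2
    then show ?thesis
      using drift_not_spreader[OF inv] by (auto simp: pending_def view_def spreader_def)
  next
    case 3
    have "view pending \<eta> \<le> real (k + d)"
      using view_bounds[OF pending_bounds] by auto
    then have "view pending \<eta> / (real (k + d) * real (Suc n))
        \<le> real (k + d) / (real (k + d) * real (Suc n))"
      by (intro divide_right_mono) auto
    also have "\<dots> = 1 / real (Suc n)"
      using k_pos by simp
    finally show ?thesis
      using drift_pending_spreader[OF inv 3] drift_informed spreader_informed[OF 3] by simp
  qed
qed

lemma final_ind_absorb_view_dist:
  assumes inv: "cfg_inv k n \<eta>"
  shows "\<bar>view (final_ind i) \<eta> - view (absorb_view i) \<eta>\<bar> \<le> view pending \<eta>"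
proof -
  have "-1 \<le> \<eta> v" "\<eta> v \<le> int k"
    using cfg_inv_range[OF inv] by auto
  then consider "\<eta> v = -1" | "\<eta> v = int k" | "0 \<le> \<eta> v" "\<eta> v < int k"
    by linarith
  then show ?thesis
  proof cases
    case 3
    then have "1 \<le> view pending \<eta>"
      unfolding view_def pending_def by simp
    moreover have "view (absorb_view i) \<eta> \<in> {0..1}" "view (final_ind i) \<eta> \<in> {0..1}"
      unfolding view_def using absorb_view_bounds final_ind_bounds by blast+
    ultimately show ?thesis
      by auto
  qed (auto simp: view_def final_ind_def absorb_view_def pending_def absorb_prob_stifler)
qed

definition expect :: "nat \<Rightarrow> (int \<Rightarrow> nat \<Rightarrow> real) \<Rightarrow> real" where
  "expect n F = measure_pmf.expectation (mt_cfg d k n) (view F)"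

lemma expect_Suc:
  assumes F: "\<forall>s j. F s j \<in> {0..B}"
  shows "expect (Suc n) F = expect n F + measure_pmf.expectation (mt_cfg d k n) (drift F)"
proof -
  have "expect (Suc n) F
      = measure_pmf.expectation (mt_cfg d k n) (\<lambda>\<eta>. measure_pmf.expectation (mt_step d k \<eta>) (view F))"
    unfolding expect_def mt_cfg.simps
    by (rule expectation_bind_pmf[where B = B]) (use view_bounds[OF F] in force)
  also have "\<dots> = measure_pmf.expectation (mt_cfg d k n) (\<lambda>\<eta>. view F \<eta> + drift F \<eta>)"
    unfolding drift_def by simp
  also have "\<dots> = expect n F + measure_pmf.expectation (mt_cfg d k n) (drift F)"
    unfolding expect_def using integrable_view[OF F] integrable_drift[OF F] by (rule Bochner_Integration.integral_add)
  finally show ?thesis .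
qed

lemma informed_by_eq_expect: "informed_by d k n v = expect n informed_ind"
proof -
  have "expect n informed_ind = measure_pmf.expectation (mt_cfg d k n) (indicator {\<eta>. \<eta> v \<noteq> -1})"
    unfolding expect_def
    by (rule Bochner_Integration.integral_cong) (auto simp: view_def informed_ind_def)
  then show ?thesis
    unfolding informed_by_def by simp
qed

lemma joint_by_eq_expect: "joint_by d k n v i = expect n (final_ind i)"
proof -
  have "expect n (final_ind i)
      = measure_pmf.expectation (mt_cfg d k n) (indicator {\<eta>. \<eta> v \<noteq> -1 \<and> nsucc_informed d \<eta> v = i})"
    unfolding expect_def
    by (rule Bochner_Integration.integral_cong)
       (auto simp: view_def final_ind_def nsucc_informed_def informed_succs_def)
  then show ?thesis
    unfolding joint_by_def by simp
qed

lemma informed_by_Suc: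
  "informed_by d k (Suc n) v
 = informed_by d k n v + measure_pmf.expectation (mt_cfg d k n) (drift informed_ind)"
  unfolding informed_by_eq_expect by (rule expect_Suc[OF informed_ind_bounds])

lemma incseq_informed_by: "incseq (\<lambda>n. informed_by d k n v)"
proof (rule incseq_SucI)
  fix n
  have "AE \<eta> in measure_pmf (mt_cfg d k n). 0 \<le> drift informed_ind \<eta>"
    using AE_cfg_inv by (rule eventually_mono) (rule drift_informed_ind_nonneg)
  then show "informed_by d k n v \<le> informed_by d k (Suc n) v"
    unfolding informed_by_Suc by (simp add: integral_nonneg_AE)
qed

lemma expect_absorb_view: "expect n (absorb_view i) = absorb_prob d k i 0 0 * informed_by d k n v"
proof (induction n)
  case 0
  have "init_cfg v = -1"
    using v_nonroot by (simp add: init_cfg_def)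
  then show ?case
    by (simp add: expect_def view_def absorb_view_def informed_by_def)
next
  case (Suc n)
  have "AE \<eta> in measure_pmf (mt_cfg d k n).
      drift (absorb_view i) \<eta> = absorb_prob d k i 0 0 * drift informed_ind \<eta>"
    using AE_cfg_inv by (rule eventually_mono) (rule drift_absorb_view)
  then have "measure_pmf.expectation (mt_cfg d k n) (drift (absorb_view i))
           = absorb_prob d k i 0 0 * measure_pmf.expectation (mt_cfg d k n) (drift informed_ind)"
    by (simp add: integral_cong_AE)
  then show ?case
    using Suc expect_Suc[OF absorb_view_bounds] informed_by_Suc by (simp add: algebra_simps)
qed

lemma expect_pending_Suc_le:
  "expect (Suc n) pending \<le> expect n pending - 1 / real (k + d) * (expect n pending / real (Suc n))
     + real (k + d) * (informed_by d k (Suc n) v - informed_by d k n v)"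
proof -
  let ?M = "measure_pmf (mt_cfg d k n)" and ?c = "real (k + d) * real (Suc n)"
  have "AE \<eta> in ?M. drift pending \<eta> \<le> real (k + d) * drift informed_ind \<eta> - view pending \<eta> / ?c"
    using AE_cfg_inv by (rule eventually_mono) (rule drift_pending)
  then have "measure_pmf.expectation (mt_cfg d k n) (drift pending)
    \<le> measure_pmf.expectation (mt_cfg d k n) (\<lambda>\<eta>. real (k + d) * drift informed_ind \<eta> - view pending \<eta> / ?c)"
    using integrable_drift[OF pending_bounds] integrable_drift[OF informed_ind_bounds]
      integrable_view[OF pending_bounds]
    by (intro integral_mono_AE) auto
  also have "\<dots> = real (k + d) * (informed_by d k (Suc n) v - informed_by d k n v) - expect n pending / ?c"
    unfolding expect_def informed_by_Suc
    using integrable_drift[OF informed_ind_bounds] integrable_view[OF pending_bounds]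
    by simp
  finally show ?thesis
    using expect_Suc[OF pending_bounds, of n] by simp
qed

lemma joint_by_approx:
  "\<bar>joint_by d k n v i - absorb_prob d k i 0 0 * informed_by d k n v\<bar> \<le> expect n pending"
proof -
  let ?M = "measure_pmf (mt_cfg d k n)"
  have "joint_by d k n v i - absorb_prob d k i 0 0 * informed_by d k n v
      = measure_pmf.expectation (mt_cfg d k n) (\<lambda>\<eta>. view (final_ind i) \<eta> - view (absorb_view i) \<eta>)"
    unfolding joint_by_eq_expect expect_absorb_view[symmetric] expect_def
    using integrable_view[OF final_ind_bounds] integrable_view[OF absorb_view_bounds]
    by (rule Bochner_Integration.integral_diff[symmetric])
  also have "\<bar>\<dots>\<bar> \<le> measure_pmf.expectation (mt_cfg d k n) (\<lambda>\<eta>. \<bar>view (final_ind i) \<eta> - view (absorb_view i) \<eta>\<bar>)"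
    by (rule integral_abs_bound)
  also have "\<dots> \<le> expect n pending"
    unfolding expect_def
    using integrable_view[OF final_ind_bounds] integrable_view[OF absorb_view_bounds]
      integrable_view[OF pending_bounds]
    by (intro integral_mono_AE) (auto intro: eventually_mono[OF AE_cfg_inv] final_ind_absorb_view_dist)
  finally show ?thesis .
qed

lemma expect_pending_tendsto_0: "(\<lambda>n. expect n pending) \<longlonglongrightarrow> 0"
proof (rule harmonic_decay_tendsto_zero[where c = "1 / real (k + d)" and K = "real (k + d)"
      and P = "\<lambda>n. informed_by d k n v" and M = 1])
  show "0 \<le> expect n pending" for n
    unfolding expect_def using expectation_view_bounds[OF pending_bounds, of "mt_cfg d k n"] by simp
  show "informed_by d k n v \<le> 1" for n
    unfolding informed_by_def by simp
qed (use k_pos incseq_informed_by expect_pending_Suc_le in auto)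

lemma informed_by_tendsto: "(\<lambda>n. informed_by d k n v) \<longlonglongrightarrow> P_informed d k v"
proof -
  have "convergent (\<lambda>n. informed_by d k n v)"
    using incseq_convergent[OF incseq_informed_by, of 1] by (auto simp: informed_by_def intro: convergentI)
  then show ?thesis
    unfolding P_informed_def by (simp add: convergent_LIMSEQ_iff)
qed

lemma P_informed_pos: "0 < P_informed d k v"
proof -
  obtain n \<eta> where "\<eta> \<in> set_pmf (mt_cfg d k n)" "\<eta> v = 0"
    using fresh_spreader_reachable[OF k_pos tvert_v] by blast
  then have "0 < informed_by d k n v"
    unfolding informed_by_def using measure_pmf_posI[of \<eta> _ "{\<eta>. \<eta> v \<noteq> -1}"] by simp
  also have "\<dots> \<le> P_informed d k v"
    using incseq_informed_by informed_by_tendsto by (rule incseq_le)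
  finally show ?thesis .
qed

lemma joint_by_tendsto:
  "(\<lambda>n. joint_by d k n v i) \<longlonglongrightarrow> absorb_prob d k i 0 0 * P_informed d k v"
proof -
  have "eventually (\<lambda>n. norm (joint_by d k n v i - absorb_prob d k i 0 0 * informed_by d k n v)
      \<le> expect n pending) sequentially"
    using joint_by_approx by (intro always_eventually allI) simp
  then have "(\<lambda>n. joint_by d k n v i - absorb_prob d k i 0 0 * informed_by d k n v) \<longlonglongrightarrow> 0"
    using expect_pending_tendsto_0 by (rule Lim_null_comparison)
  then have "(\<lambda>n. (joint_by d k n v i - absorb_prob d k i 0 0 * informed_by d k n v)
      + absorb_prob d k i 0 0 * informed_by d k n v) \<longlonglongrightarrow> 0 + absorb_prob d k i 0 0 * P_informed d k v"
    by (intro tendsto_add tendsto_mult_left informed_by_tendsto)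
  then show ?thesis
    by simp
qed

lemma P_X_eq_absorb_prob: "P_X d k v i = absorb_prob d k i 0 0"
proof -
  have "P_joint d k v i = absorb_prob d k i 0 0 * P_informed d k v"
    unfolding P_joint_def using joint_by_tendsto by (rule limI)
  then show ?thesis
    unfolding P_X_def using P_informed_pos by simp
qed

end

theorem lemma3:
  fixes d k :: nat and v :: "nat list"
  assumes "k \<ge> 2" and "d \<ge> 2"
    and "tvert d v" and "v \<noteq> []"
  shows "convergent (\<lambda>n. informed_by d k n v)
    \<and> P_informed d k v > 0
    \<and> (\<forall>i \<le> d. convergent (\<lambda>n. joint_by d k n v i)
        \<and> P_X d k v i = real (d choose i) * fact (i + 1) / real (d + 1) ^ (i + k)
                         * real (S_ik i k))
    \<and> (\<Sum>i = 0..d. real i * P_X d k v i) > 1"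
proof -
  interpret mt_vertex d k v
    using assms by unfold_locales auto
  have "convergent (\<lambda>n. joint_by d k n v i)" for i
    using joint_by_tendsto by (rule convergentI)
  moreover have "P_X d k v i = real (d choose i) * fact (i + 1) / real (d + 1) ^ (i + k) * real (S_ik i k)"
    if "i \<le> d" for i
    unfolding P_X_eq_absorb_prob using absorb_prob_0_0[OF that] assms(1) by simp
  moreover have "(\<Sum>i = 0..d. real i * P_X d k v i) = absorb_mean d k 0 0"
    unfolding P_X_eq_absorb_prob absorb_mean_def ..
  moreover have "convergent (\<lambda>n. informed_by d k n v)"
    using informed_by_tendsto by (rule convergentI)
  ultimately show ?thesis
    using P_informed_pos absorb_mean_0_0_gt_1[OF assms(1,2)] by simp
qed

end
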